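(* Let $\mathcal{I}\subseteq\mathcal{M}_m$ be decreasing, $r=\max_{u\in\mathcal{I}}\deg u$, and $f,g\in\mathcal{I}_r$ with $\deg(\gcd(f,g))=r-3$. Then $$\bigl|\mathrm{LTA}(m,2)\cdot f+\mathrm{LTA}(m,2)\cdot g\bigr|=\bigl|\mathrm{LTA}(m,2)\cdot f\bigr|\cdot\bigl|\mathrm{LTA}(m,2)\cdot g\bigr|.$$
   Context: $\mathcal{M}_m$: square-free monomials in $x_0,\dots,x_{m-1}$ in $\mathbf{R}_m=\mathbb{F}_2[x_0,\dots,x_{m-1}]/(x_i^2-x_i)$; $\operatorname{ind}(u)$ the variable indices, $\deg u=|\operatorname{ind}u|$, $\gcd$ has index set the intersection. For equal-degree monomials with increasing indices, $u\preceq_{sh}v$ iff componentwise $\le$; $u\preceq v$ iff $u\preceq_{sh}v^*\mid v$ for some $v^*$; $\mathcal{I}$ decreasing if $f\in\mathcal{I}$, $g\preceq f\Rightarrow g\in\mathcal{I}$; $\mathcal{I}_r$ its degree-$r$ elements. $\mathrm{LTA}(m,2)$: pairs $(\mathbf{B},\varepsilon)$, $\mathbf{B}=(b_{i,j})$ binary lower unitriangular, $\varepsilon\in\mathbb{F}_2^m$, acting on monomial $u$ by $x_i\mapsto x_i+\sum_{j<i}b_{i,j}x_j+\varepsilon_i$ for $i\in\operatorname{ind}u$; $\mathrm{LTA}(m,2)\cdot f$ is the orbit. $A+B=\{a+b\}$. *)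

theory Defs
  imports Main
begin

text \<open>Square-free monomials of R_m are represented by their index sets (finite subsets
of {..<m}); elements of R_m = F_2[x_0..x_{m-1}]/(x_i^2-x_i) are represented in the
monomial basis, i.e. as finite sets of monomials (coefficients in F_2).\<close>

type_synonym monomial = "nat set"
type_synonym rpoly = "nat set set"

definition monomials :: "nat \<Rightarrow> monomial set" where
  "monomials m = {u. u \<subseteq> {..<m}}"

definition preceq_sh :: "monomial \<Rightarrow> monomial \<Rightarrow> bool" where
  "preceq_sh u v \<longleftrightarrow> finite u \<and> finite v \<and> card u = card v \<and>
     (\<forall>k < card u. sorted_list_of_set u ! k \<le> sorted_list_of_set v ! k)"

definition preceq :: "monomial \<Rightarrow> monomial \<Rightarrow> bool" where
  "preceq u v \<longleftrightarrow> (\<exists>w. w \<subseteq> v \<and> preceq_sh u w)"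

definition decreasing :: "nat \<Rightarrow> monomial set \<Rightarrow> bool" where
  "decreasing m I \<longleftrightarrow> (\<forall>f\<in>I. \<forall>g\<in>monomials m. preceq g f \<longrightarrow> g \<in> I)"

text \<open>Ring operations of R_m in the monomial basis: addition is symmetric difference,
product uses x_a x_b = x_{a \<union> b} with F_2 coefficients.\<close>
definition padd :: "rpoly \<Rightarrow> rpoly \<Rightarrow> rpoly" where
  "padd p q = (p - q) \<union> (q - p)"

definition pmul :: "rpoly \<Rightarrow> rpoly \<Rightarrow> rpoly" where
  "pmul p q = {c. odd (card {(a, b). a \<in> p \<and> b \<in> q \<and> a \<union> b = c})}"

definition pone :: rpoly where
  "pone = {{}}"

text \<open>Image of x_i: x_i + sum_{j<i} b_{i,j} x_j + eps_i.\<close>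
definition lin :: "(nat \<Rightarrow> nat \<Rightarrow> bool) \<Rightarrow> (nat \<Rightarrow> bool) \<Rightarrow> nat \<Rightarrow> rpoly" where
  "lin b eps i = {{i}} \<union> {{j} | j. j < i \<and> b i j} \<union> (if eps i then {{}} else {})"

definition lta_act :: "(nat \<Rightarrow> nat \<Rightarrow> bool) \<Rightarrow> (nat \<Rightarrow> bool) \<Rightarrow> monomial \<Rightarrow> rpoly" where
  "lta_act b eps u = foldr (\<lambda>i acc. pmul (lin b eps i) acc) (sorted_list_of_set u) pone"

text \<open>Orbit LTA(m,2)\<cdot>u. Only entries b i j with j < i < m and eps i with i < m are used,
so quantifying over all b, eps gives exactly the orbit under lower unitriangular B.\<close>
definition lta_orbit :: "nat \<Rightarrow> monomial \<Rightarrow> rpoly set" where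
  "lta_orbit m u = {lta_act b eps u | b eps.
      (\<forall>i j. b i j \<longrightarrow> j < i \<and> i < m) \<and> (\<forall>i. eps i \<longrightarrow> i < m)}"

definition setsum :: "rpoly set \<Rightarrow> rpoly set \<Rightarrow> rpoly set" where
  "setsum A B = {padd a c | a c. a \<in> A \<and> c \<in> B}"

end

theory Submission
  imports Defs
begin

text \<open>Points of \<open>\<bbbF>\<^sub>2\<^sup>N\<close> are identified with their supports, and a polynomial is
evaluated at a point by counting its monomials dividing the point. The image of the monomial
\<open>x\<^sub>u\<close> under \<open>(B, \<epsilon>)\<close> evaluates to the indicator of an affine flat with pivot set \<open>u\<close>,
namely \<open>x\<^sub>i = 1 + \<epsilon>\<^sub>i + \<Sum>\<^bsub>j<i\<^esub> b\<^sub>i\<^sub>j x\<^sub>j\<close> for \<open>i \<in> u\<close>, and polynomials are determined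
by their values. So the theorem amounts to: if \<open>F\<^sub>1 \<triangle> F\<^sub>2 = G\<^sub>1 \<triangle> G\<^sub>2\<close> for flats with pivot
sets \<open>f\<close> and \<open>g\<close>, where \<open>f - g\<close> and \<open>g - f\<close> have at least three elements, then
\<open>F\<^sub>1 = F\<^sub>2\<close> and \<open>G\<^sub>1 = G\<^sub>2\<close>.

Induct on the largest index \<open>t\<close>. The discrete derivative in direction \<open>t\<close> sends a flat with
top pivot \<open>t\<close> to the flat of its remaining equations and kills a flat not involving \<open>t\<close>; so
if, say, \<open>t \<in> f\<close>, then \<open>F\<^sub>1\<close> and \<open>F\<^sub>2\<close> have the same lower flat, by induction or directly.
Then \<open>F\<^sub>1 \<triangle> F\<^sub>2\<close> is that lower flat cut by one hyperplane: empty, or a flat whose pivot set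
lies in \<open>f\<close> plus one index. On the other side, a nonempty \<open>G\<^sub>1 \<triangle> G\<^sub>2\<close> that is a flat
has a pivot set missing at most one element of \<open>g\<close>, and equal nonempty flats have equal
pivot sets. Hence \<open>|g - f| \<le> 2\<close> unless both symmetric differences are empty.\<close>

definition parity :: "nat set \<Rightarrow> nat set \<Rightarrow> bool" where
  "parity D x \<longleftrightarrow> odd (card (D \<inter> x))"

definition triangular :: "nat set \<Rightarrow> (nat \<Rightarrow> nat set) \<Rightarrow> bool" where
  "triangular k B \<longleftrightarrow> finite k \<and> (\<forall>i\<in>k. B i \<subseteq> {..<i})"

definition flat :: "nat set \<Rightarrow> (nat \<Rightarrow> nat set) \<Rightarrow> (nat \<Rightarrow> bool) \<Rightarrow> nat set set" where
  "flat k B e = {x. \<forall>i\<in>k. (i \<in> x) = (parity (B i) x = e i)}"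

definition deriv :: "nat \<Rightarrow> nat set set \<Rightarrow> nat set set" where
  "deriv t S = {x. (insert t x \<in> S) \<noteq> (x - {t} \<in> S)}"

lemma finite_nat_subset_lessThan:
  fixes N :: "nat set"
  assumes "finite N"
  obtains n where "N \<subseteq> {..<n}"
  using assms by (auto simp: finite_nat_set_iff_bounded)

lemma odd_card_sym_diff:
  assumes "finite X" "finite Y"
  shows "odd (card (sym_diff X Y)) \<longleftrightarrow> odd (card X) \<noteq> odd (card Y)"
proof -
  have "card X = card (X - Y) + card (X \<inter> Y)" "card Y = card (Y - X) + card (X \<inter> Y)"
    using card_Int_Diff[OF assms(1), of Y] card_Int_Diff[OF assms(2), of X] by (simp_all add: Int_commute)
  moreover have "card (sym_diff X Y) = card (X - Y) + card (Y - X)"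
    using assms by (intro card_Un_disjoint) auto
  ultimately show ?thesis by auto
qed

lemma parity_sym_diff:
  assumes "finite D1" "finite D2"
  shows "parity (sym_diff D1 D2) x \<longleftrightarrow> parity D1 x \<noteq> parity D2 x"
proof -
  have "sym_diff D1 D2 \<inter> x = sym_diff (D1 \<inter> x) (D2 \<inter> x)" by auto
  then show ?thesis using odd_card_sym_diff[of "D1 \<inter> x" "D2 \<inter> x"] assms by (simp add: parity_def)
qed

lemma parity_remove:
  assumes "n \<in> D" "finite D"
  shows "parity D x \<longleftrightarrow> (n \<in> x) \<noteq> parity (D - {n}) x"
proof -
  have "D \<inter> x = (if n \<in> x then insert n ((D - {n}) \<inter> x) else (D - {n}) \<inter> x)"
    using assms by auto
  then show ?thesis using assms by (simp add: parity_def)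
qed

lemma parity_cong_below:
  assumes "D \<subseteq> {..<n}" "x \<inter> {..<n} = y \<inter> {..<n}"
  shows "parity D x = parity D y"
proof -
  have "D \<inter> x = D \<inter> y" using assms by blast
  then show ?thesis by (simp add: parity_def)
qed

lemma triangular_finite: "triangular k B \<Longrightarrow> i \<in> k \<Longrightarrow> finite (B i)"
  by (auto simp: triangular_def intro: finite_subset[of _ "{..<i}"])

lemma triangular_Diff: "triangular k B \<Longrightarrow> triangular (k - A) B"
  by (auto simp: triangular_def)

lemma flat_antimono: "k' \<subseteq> k \<Longrightarrow> flat k B e \<subseteq> flat k' B e"
  by (auto simp: flat_def)

lemma flat_prefix_Suc:
  assumes tri: "triangular k B" and y: "y \<in> flat (k \<inter> {..<n}) B e"
  defines "y' \<equiv> if n \<in> k then (if parity (B n) y = e n then insert n y else y - {n}) else y"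
  shows "y' \<in> flat (k \<inter> {..<Suc n}) B e"
proof -
  have below: "y' \<inter> {..<n} = y \<inter> {..<n}" by (auto simp: y'_def)
  have par: "parity (B i) y' = parity (B i) y" if "i \<in> k" "i \<le> n" for i
    using tri that below by (intro parity_cong_below[of _ n]) (fastforce simp: triangular_def)+
  have "(i \<in> y') = (parity (B i) y' = e i)" if "i \<in> k" "i < Suc n" for i
  proof (cases "i = n")
    case True
    then show ?thesis using par[of n] that by (auto simp: y'_def)
  next
    case False
    then have "i < n" using that by simp
    then have "i \<in> y' \<longleftrightarrow> i \<in> y" using below by blast
    moreover have "(i \<in> y) = (parity (B i) y = e i)" using y that \<open>i < n\<close> by (simp add: flat_def)
    ultimately show ?thesis using par[of i] that \<open>i < n\<close> by simp
  qed
  then show ?thesis by (auto simp: flat_def)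
qed

lemma flat_extend:
  assumes tri: "triangular k B" and z: "z \<in> flat (k \<inter> {..<p}) B e"
  shows "\<exists>y\<in>flat k B e. \<forall>j. j \<notin> k \<or> j < p \<longrightarrow> (j \<in> y \<longleftrightarrow> j \<in> z)"
proof -
  let ?agree = "\<lambda>y. \<forall>j. j \<notin> k \<or> j < p \<longrightarrow> (j \<in> y \<longleftrightarrow> j \<in> z)"
  have "\<exists>y\<in>flat (k \<inter> {..<n}) B e. ?agree y" for n
  proof (induction n)
    case 0
    show ?case by (rule bexI[of _ z]) (auto simp: flat_def)
  next
    case (Suc n)
    then obtain y where y: "y \<in> flat (k \<inter> {..<n}) B e" "?agree y" by blast
    define y' where "y' = (if n \<in> k then (if parity (B n) y = e n then insert n y else y - {n}) else y)"
    have "?agree y'"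
    proof (intro allI impI)
      fix j assume j: "j \<notin> k \<or> j < p"
      show "j \<in> y' \<longleftrightarrow> j \<in> z"
      proof (cases "j = n \<and> n \<in> k")
        case True
        then have "y \<inter> {..<n} = z \<inter> {..<n}" using j y(2) by auto
        then have "parity (B n) y = parity (B n) z"
          using tri True by (intro parity_cong_below[of _ n]) (auto simp: triangular_def)
        then show ?thesis using z True j by (auto simp: flat_def y'_def)
      next
        case False
        then show ?thesis using j y(2) by (auto simp: y'_def)
      qed
    qed
    then show ?case using flat_prefix_Suc[OF tri y(1)] by (auto simp: y'_def)
  qed
  moreover obtain n where "k \<subseteq> {..<n}"
    using tri finite_nat_subset_lessThan by (auto simp: triangular_def)
  ultimately show ?thesis by (metis inf.absorb1)
qed

lemma flat_eq_imp_pivots_subset: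
  assumes tri: "triangular k B" "triangular k' B'"
    and eq: "flat k B e = flat k' B' e'" and ne: "flat k B e \<noteq> {}"
  shows "k \<subseteq> k'"
proof
  fix i assume i: "i \<in> k"
  show "i \<in> k'"
  proof (rule ccontr)
    assume i': "i \<notin> k'"
    obtain x where x: "x \<in> flat k B e" using ne by blast
    txt \<open>Toggle the non-pivot \<open>i\<close> of \<open>x\<close> and re-solve the pivots of \<open>k'\<close> above \<open>i\<close>: the
      result agrees with \<open>x\<close> below \<open>i\<close> but not at \<open>i\<close>, violating the equation of pivot \<open>i\<close>.\<close>
    define z where "z = (if i \<in> x then x - {i} else insert i x)"
    have z_below: "z \<inter> {..<i} = x \<inter> {..<i}" by (auto simp: z_def)
    have "z \<in> flat (k' \<inter> {..<i}) B' e'"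
    proof -
      have "(j \<in> z) = (parity (B' j) z = e' j)" if "j \<in> k'" "j < i" for j
      proof -
        have "parity (B' j) z = parity (B' j) x"
          using tri(2) that z_below by (intro parity_cong_below[of _ i]) (fastforce simp: triangular_def)+
        moreover have "(j \<in> x) = (parity (B' j) x = e' j)" using x eq that by (auto simp: flat_def)
        ultimately show ?thesis using that by (auto simp: z_def)
      qed
      then show ?thesis by (auto simp: flat_def)
    qed
    then obtain y where y: "y \<in> flat k' B' e'" "\<forall>j. j \<notin> k' \<or> j < i \<longrightarrow> (j \<in> y \<longleftrightarrow> j \<in> z)"
      using flat_extend[OF tri(2)] by blast
    have "y \<inter> {..<i} = x \<inter> {..<i}" using y(2) z_below by auto
    then have "parity (B i) y = parity (B i) x"
      using tri(1) i by (intro parity_cong_below[of _ i]) (auto simp: triangular_def)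
    moreover have "(i \<in> y) = (parity (B i) y = e i)" "(i \<in> x) = (parity (B i) x = e i)"
      using y(1) x eq i by (auto simp: flat_def)
    moreover have "i \<in> y \<longleftrightarrow> i \<notin> x" using y(2) i' by (auto simp: z_def)
    ultimately show False by blast
  qed
qed

lemma flat_Int_hyperplane_pivot:
  assumes "triangular k B" "n \<in> k" "n \<in> D" "finite D"
  shows "{x \<in> flat k B e. parity D x = c} =
    {x \<in> flat k B e. parity (sym_diff (D - {n}) (B n)) x = (c = e n)}"
  using assms
  by (auto simp: parity_sym_diff parity_remove[of n D] triangular_finite flat_def)

lemma flat_Int_hyperplane_free:
  assumes "n \<notin> k" "n \<in> D" "finite D"
  shows "{x \<in> flat k B e. parity D x = c} = flat (insert n k) (B(n := D - {n})) (e(n := \<not> c))"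
  using assms by (auto simp: flat_def parity_remove[of n D])

lemma flat_Int_hyperplane:
  assumes tri: "triangular k B" and D: "finite D"
  shows "{x \<in> flat k B e. parity D x = c} = {} \<or>
    (\<exists>k' B' e' p. triangular k' B' \<and> {x \<in> flat k B e. parity D x = c} = flat k' B' e' \<and>
      k \<subseteq> k' \<and> k' \<subseteq> insert p k)"
    (is "?cut D c")
proof -
  have "?cut D c" if "D \<subseteq> {..<n}" for n D c
    using that
  proof (induction n arbitrary: D c)
    case 0
    then have "{x \<in> flat k B e. parity D x = c} = (if c then {} else flat k B e)"
      by (auto simp: parity_def)
    then show ?case using tri by auto
  next
    case (Suc n)
    have fD: "finite D" and Dn: "D - {n} \<subseteq> {..<n}"
      using Suc.prems finite_subset by (auto simp: less_Suc_eq)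
    consider "n \<notin> D" | "n \<in> D" "n \<in> k" | "n \<in> D" "n \<notin> k" by blast
    then show ?case
    proof cases
      case 1
      then show ?thesis using Suc Dn by simp
    next
      case 2
      have "sym_diff (D - {n}) (B n) \<subseteq> {..<n}" using Dn tri 2 by (auto simp: triangular_def)
      then have "?cut (sym_diff (D - {n}) (B n)) (c = e n)" by (rule Suc.IH)
      then show ?thesis unfolding flat_Int_hyperplane_pivot[OF tri 2(2,1) fD] .
    next
      case 3
      have "triangular (insert n k) (B(n := D - {n}))" using tri Dn by (auto simp: triangular_def)
      then show ?thesis using flat_Int_hyperplane_free[OF 3(2,1) fD] by blast
    qed
  qed
  moreover obtain n where "D \<subseteq> {..<n}"
    using D by (rule finite_nat_subset_lessThan)
  ultimately show ?thesis by blast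
qed

lemma flat_insert_pivot:
  "t \<in> k \<Longrightarrow> flat k B e = {x \<in> flat (k - {t}) B e. (t \<in> x) = (parity (B t) x = e t)}"
  by (auto simp: flat_def)

lemma flat_toggle_above:
  assumes "triangular k B" "k \<subseteq> {..<t}"
  shows "insert t x \<in> flat k B e \<longleftrightarrow> x \<in> flat k B e"
    and "x - {t} \<in> flat k B e \<longleftrightarrow> x \<in> flat k B e"
proof -
  have "parity (B i) (insert t x) = parity (B i) x" "parity (B i) (x - {t}) = parity (B i) x"
    if "i \<in> k" for i
    using assms that by (auto intro!: parity_cong_below[of _ i] simp: triangular_def)
  moreover have "t \<notin> k" using assms(2) by auto
  ultimately show "insert t x \<in> flat k B e \<longleftrightarrow> x \<in> flat k B e"
    and "x - {t} \<in> flat k B e \<longleftrightarrow> x \<in> flat k B e"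
    by (auto simp: flat_def)
qed

lemma deriv_sym_diff: "deriv t (sym_diff S T) = sym_diff (deriv t S) (deriv t T)"
  by (auto simp: deriv_def)

lemma deriv_flat:
  assumes tri: "triangular k B" and top: "k \<subseteq> {..t}"
  shows "deriv t (flat k B e) = (if t \<in> k then flat (k - {t}) B e else {})"
proof (cases "t \<in> k")
  case True
  have lower: "triangular (k - {t}) B" "k - {t} \<subseteq> {..<t}"
    using tri top by (auto simp: triangular_Diff)
  have "parity (B t) (insert t x) = parity (B t) x" "parity (B t) (x - {t}) = parity (B t) x" for x
    using tri True by (auto intro!: parity_cong_below[of _ t] simp: triangular_def)
  then show ?thesis
    using True by (auto simp: deriv_def flat_insert_pivot[OF True] flat_toggle_above[OF lower])
next
  case False
  then have "k \<subseteq> {..<t}" using top by (auto simp: subset_iff le_less)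
  then show ?thesis using False tri by (auto simp: deriv_def flat_toggle_above)
qed

lemma deriv_sym_diff_flats:
  assumes "triangular k B1" "triangular k B2" "k \<subseteq> {..t}"
  shows "deriv t (sym_diff (flat k B1 e1) (flat k B2 e2)) =
    (if t \<in> k then sym_diff (flat (k - {t}) B1 e1) (flat (k - {t}) B2 e2) else {})"
  using assms by (cases "t \<in> k") (simp_all add: deriv_sym_diff deriv_flat)

lemma sym_diff_flats_same_lower:
  assumes tri: "triangular k B1" "triangular k B2" and t: "t \<in> k"
    and lower: "flat (k - {t}) B1 e1 = flat (k - {t}) B2 e2"
  shows "sym_diff (flat k B1 e1) (flat k B2 e2) = {} \<or>
    (\<exists>k' B' e' p. triangular k' B' \<and> sym_diff (flat k B1 e1) (flat k B2 e2) = flat k' B' e' \<and>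
      k - {t} \<subseteq> k' \<and> k' \<subseteq> insert p (k - {t}))"
proof -
  have fin: "finite (B1 t)" "finite (B2 t)" using tri t by (simp_all add: triangular_finite)
  then have sd: "sym_diff (flat k B1 e1) (flat k B2 e2) =
      {x \<in> flat (k - {t}) B1 e1. parity (sym_diff (B1 t) (B2 t)) x = (e1 t = e2 t)}"
    unfolding flat_insert_pivot[OF t] lower by (auto simp: parity_sym_diff)
  show ?thesis
    unfolding sd by (rule flat_Int_hyperplane[OF triangular_Diff[OF tri(1)]]) (use fin in simp)
qed

lemma sym_diff_flats_pivots:
  assumes "triangular g B1" "triangular g B2" "triangular k B"
    and "sym_diff (flat g B1 e1) (flat g B2 e2) = flat k B e" and "flat k B e \<noteq> {}"
  shows "\<exists>a. g - k \<subseteq> {a}"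
proof -
  have "finite (g \<union> k)" using assms(1,3) by (simp add: triangular_def)
  then obtain n where "g \<union> k \<subseteq> {..<n}" by (rule finite_nat_subset_lessThan)
  then show ?thesis using assms
  proof (induction n arbitrary: g k B1 B2 B e1 e2 e)
    case 0
    then show ?case by auto
  next
    case (Suc t)
    note tri = Suc.prems(2-4) and eq = Suc.prems(5) and ne = Suc.prems(6)
    have top: "g \<subseteq> {..t}" "k \<subseteq> {..t}" using Suc.prems(1) by auto
    have deriv_eq: "(if t \<in> g then sym_diff (flat (g - {t}) B1 e1) (flat (g - {t}) B2 e2) else {}) =
        (if t \<in> k then flat (k - {t}) B e else {})"
      using arg_cong[OF eq, of "deriv t"] tri top by (simp add: deriv_sym_diff_flats deriv_flat)
    have lower_ne: "flat (k - {t}) B e \<noteq> {}" using ne flat_antimono[of "k - {t}" k] by blast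
    consider "t \<notin> g" "t \<notin> k" | "t \<in> g" "t \<in> k" | "t \<in> g" "t \<notin> k" | "t \<notin> g" "t \<in> k"
      by blast
    then show ?case
    proof cases
      case 1
      then have "g \<union> k \<subseteq> {..<t}" using top by (auto simp: subset_iff le_less)
      then show ?thesis using Suc.IH tri eq ne by blast
    next
      case 2
      have "(g - {t}) \<union> (k - {t}) \<subseteq> {..<t}" using top by (auto simp: subset_iff le_less)
      then have "\<exists>a. g - {t} - (k - {t}) \<subseteq> {a}"
        using Suc.IH[OF _ triangular_Diff[OF tri(1), of "{t}"] triangular_Diff[OF tri(2), of "{t}"]
            triangular_Diff[OF tri(3), of "{t}"] _ lower_ne] deriv_eq 2 by auto
      then show ?thesis using 2 by blast
    next
      case 3
      then have "flat (g - {t}) B1 e1 = flat (g - {t}) B2 e2" using deriv_eq by simp blast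
      then obtain k' B' e' where k': "triangular k' B'" "flat k B e = flat k' B' e'" "g - {t} \<subseteq> k'"
        using sym_diff_flats_same_lower[OF tri(1,2) 3(1)] eq ne by metis
      have "k' \<subseteq> k" using flat_eq_imp_pivots_subset[OF k'(1) tri(3) k'(2)[symmetric]] k'(2) ne by simp
      then show ?thesis using k'(3) by blast
    next
      case 4
      then show ?thesis using deriv_eq lower_ne by simp
    qed
  qed
qed

lemma sym_diff_flats_eq_empty:
  assumes tri: "triangular f B1" "triangular f B2" "triangular g B3" "triangular g B4"
    and t: "t \<in> f" and lower: "flat (f - {t}) B1 e1 = flat (f - {t}) B2 e2"
    and card: "2 < card (g - f)"
    and eq: "sym_diff (flat f B1 e1) (flat f B2 e2) = sym_diff (flat g B3 e3) (flat g B4 e4)"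
  shows "sym_diff (flat f B1 e1) (flat f B2 e2) = {}"
proof (rule ccontr)
  assume ne: "sym_diff (flat f B1 e1) (flat f B2 e2) \<noteq> {}"
  then obtain k' B' e' p where k': "triangular k' B'"
    "sym_diff (flat f B1 e1) (flat f B2 e2) = flat k' B' e'" "k' \<subseteq> insert p (f - {t})"
    using sym_diff_flats_same_lower[OF tri(1,2) t lower] by blast
  obtain a where "g - k' \<subseteq> {a}"
    using sym_diff_flats_pivots[OF tri(3,4) k'(1)] eq k'(2) ne by metis
  then have "card (g - f) \<le> card {a, p}" using k'(3) by (intro card_mono) auto
  also have "\<dots> \<le> 2" by (cases "a = p") auto
  finally show False using card by simp
qed

lemma flats_sym_diff_cancel:
  assumes "triangular f B1" "triangular f B2" "triangular g B3" "triangular g B4"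
    and "2 < card (f - g)" "2 < card (g - f)"
    and "sym_diff (flat f B1 e1) (flat f B2 e2) = sym_diff (flat g B3 e3) (flat g B4 e4)"
  shows "flat f B1 e1 = flat f B2 e2 \<and> flat g B3 e3 = flat g B4 e4"
proof -
  have "finite (f \<union> g)" using assms(1,3) by (simp add: triangular_def)
  then obtain n where "f \<union> g \<subseteq> {..<n}" by (rule finite_nat_subset_lessThan)
  then show ?thesis using assms
  proof (induction n arbitrary: f g B1 B2 B3 B4 e1 e2 e3 e4)
    case 0
    then show ?case by simp
  next
    case (Suc t)
    note tri = Suc.prems(2-5) and card = Suc.prems(6,7) and eq = Suc.prems(8)
    have top: "f \<subseteq> {..t}" "g \<subseteq> {..t}" using Suc.prems(1) by auto
    have deriv_eq:
      "(if t \<in> f then sym_diff (flat (f - {t}) B1 e1) (flat (f - {t}) B2 e2) else {}) =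
       (if t \<in> g then sym_diff (flat (g - {t}) B3 e3) (flat (g - {t}) B4 e4) else {})"
      using arg_cong[OF eq, of "deriv t"] tri top by (simp add: deriv_sym_diff_flats)
    consider "t \<notin> f" "t \<notin> g" | "t \<in> f" "t \<in> g" | "t \<in> f" "t \<notin> g" | "t \<notin> f" "t \<in> g"
      by blast
    then show ?case
    proof cases
      case 1
      then have "f \<union> g \<subseteq> {..<t}" using top by (auto simp: subset_iff le_less)
      then show ?thesis using Suc.IH tri card eq by blast
    next
      case 2
      have "(f - {t}) \<union> (g - {t}) \<subseteq> {..<t}" using top by (auto simp: subset_iff le_less)
      moreover have "f - {t} - (g - {t}) = f - g" "g - {t} - (f - {t}) = g - f" using 2 by auto
      ultimately have "flat (f - {t}) B1 e1 = flat (f - {t}) B2 e2"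
        using Suc.IH[OF _ triangular_Diff[OF tri(1), of "{t}"] triangular_Diff[OF tri(2), of "{t}"]
            triangular_Diff[OF tri(3), of "{t}"] triangular_Diff[OF tri(4), of "{t}"]] card deriv_eq 2 by auto
      then have "sym_diff (flat f B1 e1) (flat f B2 e2) = {}"
        using sym_diff_flats_eq_empty[OF tri 2(1)] card eq by blast
      then show ?thesis using eq by blast
    next
      case 3
      then have "flat (f - {t}) B1 e1 = flat (f - {t}) B2 e2" using deriv_eq by simp blast
      then have "sym_diff (flat f B1 e1) (flat f B2 e2) = {}"
        using sym_diff_flats_eq_empty[OF tri 3(1)] card eq by blast
      then show ?thesis using eq by blast
    next
      case 4
      then have "flat (g - {t}) B3 e3 = flat (g - {t}) B4 e4" using deriv_eq by simp blast
      then have "sym_diff (flat g B3 e3) (flat g B4 e4) = {}"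
        using sym_diff_flats_eq_empty[OF tri(3,4,1,2) 4(2)] card eq by blast
      then show ?thesis using eq by blast
    qed
  qed
qed

definition eval :: "rpoly \<Rightarrow> nat set \<Rightarrow> bool" where
  "eval p x \<longleftrightarrow> odd (card {u \<in> p. u \<subseteq> x})"

lemma eval_padd:
  assumes "finite p" "finite q"
  shows "eval (padd p q) x \<longleftrightarrow> eval p x \<noteq> eval q x"
proof -
  have "{u \<in> padd p q. u \<subseteq> x} = sym_diff {u \<in> p. u \<subseteq> x} {u \<in> q. u \<subseteq> x}"
    by (auto simp: padd_def)
  then show ?thesis using assms by (simp add: eval_def odd_card_sym_diff)
qed

lemma pmul_subset_image: "pmul p q \<subseteq> (\<lambda>(a, b). a \<union> b) ` (p \<times> q)"
proof
  fix c assume "c \<in> pmul p q"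
  then have "{(a, b). a \<in> p \<and> b \<in> q \<and> a \<union> b = c} \<noteq> {}"
    by (intro odd_card_imp_not_empty) (simp add: pmul_def)
  then show "c \<in> (\<lambda>(a, b). a \<union> b) ` (p \<times> q)" by force
qed

lemma finite_pmul: "finite p \<Longrightarrow> finite q \<Longrightarrow> finite (pmul p q)"
  by (rule finite_subset[OF pmul_subset_image]) auto

lemma eval_pmul:
  assumes "finite p" "finite q"
  shows "eval (pmul p q) x \<longleftrightarrow> eval p x \<and> eval q x"
proof -
  define S where "S = {a \<in> p. a \<subseteq> x} \<times> {b \<in> q. b \<subseteq> x}"
  define h :: "nat set \<times> nat set \<Rightarrow> nat set" where "h = (\<lambda>(a, b). a \<union> b)"
  define N where "N c = card {(a, b). a \<in> p \<and> b \<in> q \<and> a \<union> b = c}" for c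
  have fin: "finite S" "finite (h ` S)" using assms by (simp_all add: S_def)
  have fibre: "N c = card {s \<in> S. h s = c}" if "c \<in> h ` S" for c
  proof -
    have "c \<subseteq> x" using that by (auto simp: S_def h_def)
    then have "{(a, b). a \<in> p \<and> b \<in> q \<and> a \<union> b = c} = {s \<in> S. h s = c}"
      by (auto simp: S_def h_def)
    then show ?thesis by (simp add: N_def)
  qed
  have "card S = (\<Sum>c\<in>h ` S. card {s \<in> S. h s = c})"
    using sum.group[OF fin subset_refl, of "\<lambda>_. 1 :: nat"] by simp
  also have "\<dots> = sum N (h ` S)" using fibre by simp
  finally have card_S: "card S = sum N (h ` S)" .
  have "{c \<in> pmul p q. c \<subseteq> x} = {c \<in> h ` S. odd (N c)}"
  proof (intro set_eqI iffI)
    fix c assume c: "c \<in> {c \<in> pmul p q. c \<subseteq> x}"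
    then obtain a b where "a \<in> p" "b \<in> q" "c = a \<union> b" using pmul_subset_image by blast
    then have "c \<in> h ` S" using c by (auto simp: S_def h_def image_iff)
    then show "c \<in> {c \<in> h ` S. odd (N c)}" using c by (simp add: pmul_def N_def)
  next
    fix c assume "c \<in> {c \<in> h ` S. odd (N c)}"
    then show "c \<in> {c \<in> pmul p q. c \<subseteq> x}" by (auto simp: pmul_def N_def S_def h_def)
  qed
  then have "eval (pmul p q) x \<longleftrightarrow> odd (card S)"
    unfolding eval_def card_S using even_sum_iff[OF fin(2), of N] by simp
  then show ?thesis by (simp add: S_def eval_def card_cartesian_product)
qed

definition row :: "(nat \<Rightarrow> nat \<Rightarrow> bool) \<Rightarrow> nat \<Rightarrow> nat set" where
  "row b i = {j. j < i \<and> b i j}"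

lemma triangular_row: "finite u \<Longrightarrow> triangular u (row b)"
  by (auto simp: triangular_def row_def)

lemma finite_lin: "finite (lin b eps i)"
proof -
  have "lin b eps i \<subseteq> insert {i} (insert {} ((\<lambda>j. {j}) ` {..<i}))" by (auto simp: lin_def)
  then show ?thesis by (rule finite_subset) simp
qed

lemma eval_lin: "eval (lin b eps i) x \<longleftrightarrow> (i \<in> x) = (parity (row b i) x = eps i)"
proof -
  define X where "X = (\<lambda>j. {j}) ` (row b i \<inter> x)"
  have "{u \<in> lin b eps i. u \<subseteq> x} =
      (if i \<in> x then {{i}} else {}) \<union> (if eps i then {{}} else {}) \<union> X"
    by (auto simp: lin_def row_def X_def)
  moreover have "{i} \<notin> X" "{} \<notin> X" "finite X" by (auto simp: X_def row_def)
  moreover have "card X = card (row b i \<inter> x)"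
    unfolding X_def by (intro card_image) (auto simp: inj_on_def)
  ultimately have "card {u \<in> lin b eps i. u \<subseteq> x} =
      (if i \<in> x then 1 else 0) + (if eps i then 1 else 0) + card (row b i \<inter> x)"
    by (simp add: card_insert_if)
  then show ?thesis by (auto simp: eval_def parity_def)
qed

lemma eval_pone: "eval pone x"
proof -
  have "{u \<in> pone. u \<subseteq> x} = {{}}" by (auto simp: pone_def)
  then show ?thesis by (simp add: eval_def)
qed

lemma finite_lin_prod: "finite (foldr (\<lambda>i acc. pmul (lin b eps i) acc) is pone)"
  by (induction "is") (simp_all add: pone_def finite_lin finite_pmul)

lemma finite_lta_act: "finite (lta_act b eps u)"
  by (simp add: lta_act_def finite_lin_prod)

lemma eval_lta_act:
  assumes "finite u"
  shows "eval (lta_act b eps u) x \<longleftrightarrow> x \<in> flat u (row b) eps"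
proof -
  have "eval (foldr (\<lambda>i acc. pmul (lin b eps i) acc) is pone) x \<longleftrightarrow>
      (\<forall>i\<in>set is. eval (lin b eps i) x)" for "is"
    by (induction "is") (simp_all add: eval_pone eval_pmul finite_lin finite_lin_prod)
  then show ?thesis using assms by (simp add: lta_act_def flat_def eval_lin)
qed

lemma poly_eqI:
  assumes "finite p" "finite q" "\<And>x. eval p x = eval q x"
  shows "p = q"
proof (rule ccontr)
  assume "p \<noteq> q"
  then have "padd p q \<noteq> {}" by (auto simp: padd_def)
  moreover have "finite (padd p q)" using assms by (simp add: padd_def)
  ultimately obtain u where u: "u \<in> padd p q" "\<And>v. v \<in> padd p q \<Longrightarrow> v \<subseteq> u \<Longrightarrow> v = u"
    using finite_has_minimal by metis
  then have "{v \<in> padd p q. v \<subseteq> u} = {u}" by auto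
  then have "eval (padd p q) u" by (simp add: eval_def)
  then show False using assms by (simp add: eval_padd)
qed

lemma lta_act_eqI:
  assumes "finite u" "flat u (row b1) eps1 = flat u (row b2) eps2"
  shows "lta_act b1 eps1 u = lta_act b2 eps2 u"
  using assms by (intro poly_eqI) (simp_all add: finite_lta_act eval_lta_act)

lemma inj_on_padd_orbits:
  assumes fin: "finite f" "finite g" and card: "2 < card (f - g)" "2 < card (g - f)"
  shows "inj_on (\<lambda>(a, c). padd a c) (lta_orbit m f \<times> lta_orbit m g)"
proof (rule inj_onI, clarify)
  fix a1 c1 a2 c2
  assume "a1 \<in> lta_orbit m f" "a2 \<in> lta_orbit m f" "c1 \<in> lta_orbit m g" "c2 \<in> lta_orbit m g"
  then obtain b1 eps1 b2 eps2 b3 eps3 b4 eps4 where acts: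
    "a1 = lta_act b1 eps1 f" "a2 = lta_act b2 eps2 f" "c1 = lta_act b3 eps3 g" "c2 = lta_act b4 eps4 g"
    by (auto simp: lta_orbit_def)
  assume "padd a1 c1 = padd a2 c2"
  then have "eval (padd a1 c1) x = eval (padd a2 c2) x" for x by simp
  then have "sym_diff (flat f (row b1) eps1) (flat f (row b2) eps2) =
      sym_diff (flat g (row b3) eps3) (flat g (row b4) eps4)"
    unfolding acts using fin by (auto simp: eval_padd finite_lta_act eval_lta_act)
  then have "flat f (row b1) eps1 = flat f (row b2) eps2 \<and> flat g (row b3) eps3 = flat g (row b4) eps4"
    using flats_sym_diff_cancel fin card triangular_row by blast
  then show "a1 = a2 \<and> c1 = c2"
    unfolding acts using fin lta_act_eqI by blast
qed

theorem mainTheorem12: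
  fixes m :: nat and I :: "nat set set" and f g :: "nat set"
  assumes "I \<subseteq> monomials m"
    and "decreasing m I"
    and "f \<in> I" and "g \<in> I"
    and "card f = Max (card ` I)" and "card g = Max (card ` I)"
    and "card (f \<inter> g) + 3 = Max (card ` I)"
  shows "card (setsum (lta_orbit m f) (lta_orbit m g))
           = card (lta_orbit m f) * card (lta_orbit m g)"
proof -
  have fin: "finite f" "finite g"
    using assms(1,3,4) by (auto simp: monomials_def intro: finite_subset[of _ "{..<m}"])
  have "2 < card (f - g)" "2 < card (g - f)"
    using card_Int_Diff[OF fin(1), of g] card_Int_Diff[OF fin(2), of f] assms(5-7)
    by (simp_all add: Int_commute)
  then have "inj_on (\<lambda>(a, c). padd a c) (lta_orbit m f \<times> lta_orbit m g)"
    using inj_on_padd_orbits fin by blast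
  moreover have "setsum (lta_orbit m f) (lta_orbit m g) = (\<lambda>(a, c). padd a c) ` (lta_orbit m f \<times> lta_orbit m g)"
    by (auto simp: setsum_def)
  ultimately show ?thesis by (simp add: card_image card_cartesian_product)
qed

end
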